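(* Let $q\ge2$. For every small $\epsilon\in(0,1)$ and every $0\le\kappa<\frac{q-1}{q}$, with probability at least $1-q^{-n}$, a random code $\mathcal{C}\subseteq\Sigma_q^n$ of rate $R=1-H_q(\kappa)-\epsilon$ is list decodable against any $\kappa$ fraction of deletions (i.e., $\kappa n$ deletions) with list size $O(1/\epsilon)$, for all sufficiently large $n$.
   Context: $\Sigma_q$ is a finite alphabet of size $q$. A code $\mathcal{C}\subseteq\Sigma_q^n$ is list decodable against $\kappa n$ deletions with list size $L$ if for every word $\mathbf r$ there are at most $L$ codewords $\mathbf c\in\mathcal{C}$ such that $\mathbf r$ can be obtained from $\mathbf c$ by at most $\kappa n$ single-symbol deletions. The rate is $\log_q|\mathcal{C}|/n$; a random code of rate $R$ is a uniformly random subset of $\Sigma_q^n$ of size $q^{Rn}$. $H_q(x)=x\log_q(q-1)-x\log_qx-(1-x)\log_q(1-x)$ for $0<x<1$, $H_q(0)=H_q(1)=0$. *)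

theory Defs
  imports Complex_Main "HOL-Library.Sublist"
begin

definition Hq :: "nat \<Rightarrow> real \<Rightarrow> real" where
  "Hq q x = (if 0 < x \<and> x < 1 then
      x * log q (real q - 1) - x * log q x - (1 - x) * log q (1 - x) else 0)"

definition words :: "nat \<Rightarrow> nat \<Rightarrow> nat list set" where
  "words q n = {w. length w = n \<and> set w \<subseteq> {0..<q}}"

definition del_from :: "real \<Rightarrow> nat list \<Rightarrow> nat list \<Rightarrow> bool" where
  "del_from d c r \<longleftrightarrow> subseq r c \<and> real (length c - length r) \<le> d"

definition list_decodable_del :: "nat list set \<Rightarrow> real \<Rightarrow> nat \<Rightarrow> bool" where
  "list_decodable_del C d L \<longleftrightarrow> (\<forall>r. card {c \<in> C. del_from d c r} \<le> L)"

definition random_code_prob :: "nat \<Rightarrow> nat \<Rightarrow> nat \<Rightarrow> (nat list set \<Rightarrow> bool) \<Rightarrow> real" where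
  "random_code_prob q n M P =
     real (card {C. C \<subseteq> words q n \<and> card C = M \<and> P C}) / real (card (words q n) choose M)"

end

theory Submission
  imports Defs
begin

(* A word r obtained from a length-n word by at most \<kappa>n deletions is a subsequence of at
   most q^(H_q(\<kappa>) n) words of length n: the supersequence counts satisfy
   S(n+1, a r) \<le> S(n, r) + (q - 1) S(n, a r), which a weight \<mu>^|r| turns into
   S(n, r) \<mu>^|r| \<le> (\<mu> + q - 1)^n, and the optimal \<mu> gives the entropy bound.
   A code of size M fails list decoding with list size L iff it contains L+1 codewords with a
   common such subsequence r. A fixed (L+1)-set lies in a uniformly random M-subset of the
   q^n words with probability at most (M/q^n)^(L+1), so a union bound over the at most q^(2n)
   words r and the at most q^(H_q(\<kappa>) n (L+1)) candidate sets bounds the failure probability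
   by q^(2n) (q^(H_q(\<kappa>) n) M / q^n)^(L+1) = q^(2n - \<epsilon> n (L+1)), which is at most q^(-n) for
   every n as soon as \<epsilon> (L+1) \<ge> 3. *)

lemma finite_words: "finite (words q n)"
  unfolding words_def using finite_lists_length_eq[of "{0..<q}" n] by (simp add: conj_commute)

lemma card_words: "card (words q n) = q ^ n"
  unfolding words_def using card_lists_length_eq[of "{0..<q}" n] by (simp add: conj_commute)

lemma words_Suc: "words q (Suc n) = (\<Union>x\<in>{0..<q}. Cons x ` words q n)"
  unfolding words_def by (auto simp: length_Suc_conv)

lemma card_short_words_le:
  assumes "2 \<le> q"
  shows "card {r. set r \<subseteq> {0..<q} \<and> length r \<le> n} \<le> q ^ (2 * n)"
proof -
  have "card {r. set r \<subseteq> {0..<q} \<and> length r \<le> n} = (\<Sum>i\<le>n. q ^ i)"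
    using card_lists_length_le[of "{0..<q}" n] by simp
  also have "\<dots> \<le> (\<Sum>i\<le>n. q ^ n)"
    using assms by (intro sum_mono power_increasing) auto
  also have "\<dots> = Suc n * q ^ n"
    by simp
  also have "\<dots> \<le> 2 ^ n * q ^ n"
    using less_exp[of n] by (intro mult_right_mono) (simp_all add: Suc_le_eq)
  also have "\<dots> \<le> q ^ n * q ^ n"
    using assms by (intro mult_right_mono power_mono) auto
  finally show ?thesis
    by (simp add: mult_2 power_add)
qed

lemma set_mono_subseq: "subseq xs ys \<Longrightarrow> set xs \<subseteq> set ys"
  by (auto elim: list_emb_set)

definition supersequences :: "nat \<Rightarrow> nat \<Rightarrow> nat list \<Rightarrow> nat list set" where
  "supersequences q n r = {c \<in> words q n. subseq r c}"

lemma finite_supersequences: "finite (supersequences q n r)"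
  unfolding supersequences_def using finite_words by simp

lemma supersequences_Nil: "supersequences q n [] = words q n"
  by (simp add: supersequences_def)

lemma supersequences_0: "supersequences q 0 r = (if r = [] then {[]} else {})"
  by (auto simp: supersequences_def words_def)

lemma supersequences_Suc_Cons_subset:
  "supersequences q (Suc n) (a # r)
     \<subseteq> Cons a ` supersequences q n r \<union> (\<Union>x\<in>{0..<q} - {a}. Cons x ` supersequences q n (a # r))"
  unfolding supersequences_def words_Suc by (auto split: if_splits)

lemma card_supersequences_Suc_Cons_le:
  "card (supersequences q (Suc n) (a # r))
     \<le> card (supersequences q n r) + (q - 1) * card (supersequences q n (a # r))"
proof (cases "a < q")
  case False
  then have "supersequences q (Suc n) (a # r) = {}"
    by (auto simp: supersequences_def words_def dest!: set_mono_subseq)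
  then show ?thesis by simp
next
  case True
  have "card (supersequences q (Suc n) (a # r))
      \<le> card (Cons a ` supersequences q n r \<union> (\<Union>x\<in>{0..<q} - {a}. Cons x ` supersequences q n (a # r)))"
    by (intro card_mono supersequences_Suc_Cons_subset) (simp add: finite_supersequences)
  also have "\<dots> \<le> card (supersequences q n r)
      + (\<Sum>x\<in>{0..<q} - {a}. card (Cons x ` supersequences q n (a # r)))"
    by (intro order_trans[OF card_Un_le] add_mono card_image_le card_UN_le finite_supersequences) simp
  also have "\<dots> = card (supersequences q n r) + (q - 1) * card (supersequences q n (a # r))"
    using True by (simp add: card_image)
  finally show ?thesis .
qed

lemma card_supersequences_mult_power_le:
  fixes \<mu> :: real
  assumes "0 < q" "1 \<le> \<mu>"
  shows "real (card (supersequences q n r)) * \<mu> ^ length r \<le> (\<mu> + real q - 1) ^ n"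
proof (induction n arbitrary: r)
  case 0
  show ?case by (simp add: supersequences_0)
next
  case (Suc n)
  show ?case
  proof (cases r)
    case Nil
    have "real q ^ Suc n \<le> (\<mu> + real q - 1) ^ Suc n"
      using assms by (intro power_mono) auto
    then show ?thesis by (simp add: Nil supersequences_Nil card_words)
  next
    case (Cons a r')
    define X where "X = (\<mu> + real q - 1) ^ n"
    have "real (card (supersequences q (Suc n) r))
        \<le> real (card (supersequences q n r') + (q - 1) * card (supersequences q n r))"
      unfolding Cons of_nat_le_iff by (rule card_supersequences_Suc_Cons_le)
    also have "\<dots> = real (card (supersequences q n r')) + (real q - 1) * real (card (supersequences q n r))"
      using assms(1) by (simp add: of_nat_diff)
    finally have "real (card (supersequences q (Suc n) r)) * \<mu> ^ length r
        \<le> (real (card (supersequences q n r')) + (real q - 1) * real (card (supersequences q n r)))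
          * \<mu> ^ length r"
      using assms(2) by (intro mult_right_mono) simp_all
    also have "\<dots> = \<mu> * (real (card (supersequences q n r')) * \<mu> ^ length r')
          + (real q - 1) * (real (card (supersequences q n r)) * \<mu> ^ length r)"
      by (simp add: Cons algebra_simps)
    also have "\<dots> \<le> \<mu> * X + (real q - 1) * X"
      using Suc.IH assms by (intro add_mono mult_left_mono) (auto simp: X_def)
    also have "\<dots> = (\<mu> + real q - 1) ^ Suc n"
      by (simp add: X_def algebra_simps)
    finally show ?thesis .
  qed
qed

lemma Hq_mult_ln:
  assumes "2 \<le> q" "0 < \<kappa>" "\<kappa> < 1"
  shows "Hq q \<kappa> * ln (real q) = \<kappa> * ln (real q - 1) - \<kappa> * ln \<kappa> - (1 - \<kappa>) * ln (1 - \<kappa>)"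
  using assms by (simp add: Hq_def log_def field_simps)

lemma Hq_nonneg:
  assumes "2 \<le> q" "0 \<le> \<kappa>" "\<kappa> < 1"
  shows "0 \<le> Hq q \<kappa>"
proof (cases "\<kappa> = 0")
  case True
  then show ?thesis by (simp add: Hq_def)
next
  case False
  with assms have "0 \<le> \<kappa> * ln (real q - 1)" "\<kappa> * ln \<kappa> \<le> 0" "(1 - \<kappa>) * ln (1 - \<kappa>) \<le> 0"
    by (auto intro: mult_nonneg_nonpos)
  moreover have "Hq q \<kappa> * ln (real q) = \<kappa> * ln (real q - 1) - \<kappa> * ln \<kappa> - (1 - \<kappa>) * ln (1 - \<kappa>)"
    using Hq_mult_ln assms False by simp
  ultimately have "0 \<le> Hq q \<kappa> * ln (real q)"
    by linarith
  moreover have "0 < ln (real q)"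
    using assms by simp
  ultimately show ?thesis
    by (simp add: zero_le_mult_iff)
qed

lemma powr_Hq_eq:
  assumes q: "2 \<le> q" and \<kappa>: "0 < \<kappa>" "\<kappa> < 1"
  shows "((real q - 1) / \<kappa>) powr x / ((real q - 1) * (1 - \<kappa>) / \<kappa>) powr ((1 - \<kappa>) * x)
    = real q powr (Hq q \<kappa> * x)"
proof -
  have ln_ratio: "ln ((real q - 1) / \<kappa>) = ln (real q - 1) - ln \<kappa>"
    and ln_\<mu>: "ln ((real q - 1) * (1 - \<kappa>) / \<kappa>) = ln (real q - 1) + ln (1 - \<kappa>) - ln \<kappa>"
    using q \<kappa> by (simp_all add: ln_div ln_mult)
  have "x * ln ((real q - 1) / \<kappa>) - (1 - \<kappa>) * x * ln ((real q - 1) * (1 - \<kappa>) / \<kappa>)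
      = Hq q \<kappa> * x * ln (real q)"
    unfolding ln_ratio ln_\<mu> mult.commute[of _ x] mult.assoc Hq_mult_ln[OF q \<kappa>]
    by (simp add: algebra_simps)
  then show ?thesis
    using q \<kappa> by (simp add: powr_def exp_diff [symmetric])
qed

lemma card_supersequences_le_entropy:
  assumes q: "2 \<le> q" and \<kappa>: "0 \<le> \<kappa>" "\<kappa> < (real q - 1) / real q"
    and r: "real (n - length r) \<le> \<kappa> * real n"
  shows "real (card (supersequences q n r)) \<le> real q powr (Hq q \<kappa> * real n)"
proof (cases "\<kappa> = 0")
  case True
  with r have "n \<le> length r" by simp
  then have "supersequences q n r \<subseteq> {r}"
    by (auto simp: supersequences_def words_def) (metis le_antisym list_emb_length subseq_same_length)
  then have "card (supersequences q n r) \<le> 1"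
    using card_mono[of "{r}"] by fastforce
  then show ?thesis using True q by (simp add: Hq_def)
next
  case False
  have \<kappa>q: "\<kappa> * real q < real q - 1"
    using \<kappa> q by (simp add: field_simps)
  have "(real q - 1) / real q < 1"
    using q by simp
  with \<kappa> False have \<kappa>0: "0 < \<kappa>" and \<kappa>1: "\<kappa> < 1"
    by linarith+
  \<comment> \<open>the minimiser of \<open>(\<mu> + q - 1)^n / \<mu>^((1 - \<kappa>) n)\<close>\<close>
  define \<mu> where "\<mu> = (real q - 1) * (1 - \<kappa>) / \<kappa>"
  have \<mu>1: "1 \<le> \<mu>"
    using \<kappa>q \<kappa>0 by (simp add: \<mu>_def field_simps)
  have \<mu>_sum: "\<mu> + real q - 1 = (real q - 1) / \<kappa>"
    using \<kappa>0 by (simp add: \<mu>_def field_simps)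
  have len: "(1 - \<kappa>) * real n \<le> real (length r)"
    using r by (cases "length r \<le> n") (auto simp: of_nat_diff algebra_simps)
  have "real (card (supersequences q n r)) \<le> (\<mu> + real q - 1) ^ n / \<mu> ^ length r"
    using card_supersequences_mult_power_le[of q \<mu> n r] q \<mu>1 by (simp add: field_simps)
  also have "\<dots> = ((real q - 1) / \<kappa>) powr real n / \<mu> powr real (length r)"
    using q \<kappa>0 \<mu>1 by (simp add: \<mu>_sum powr_realpow)
  also have "\<dots> \<le> ((real q - 1) / \<kappa>) powr real n / \<mu> powr ((1 - \<kappa>) * real n)"
    using \<mu>1 len by (intro divide_left_mono powr_mono mult_pos_pos) auto
  also have "\<dots> = real q powr (Hq q \<kappa> * real n)"
    unfolding \<mu>_def by (rule powr_Hq_eq[OF q \<kappa>0 \<kappa>1])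
  finally show ?thesis .
qed

lemma binomial_mult_power_le:
  assumes "M \<le> N"
  shows "real (M choose k) * real N ^ k \<le> real (N choose k) * real M ^ k"
proof (cases "k \<le> M")
  case True
  have "real (M choose k) * real N ^ k
      = (\<Prod>i = 0..<k. real (M - i) / real (k - i)) * (\<Prod>i = 0..<k. real N)"
    using True by (simp only: binomial_altdef_of_nat prod_constant card_atLeastLessThan diff_zero)
  also have "\<dots> = (\<Prod>i = 0..<k. real (M - i) / real (k - i) * real N)"
    by (rule prod.distrib[symmetric])
  also have "\<dots> \<le> (\<Prod>i = 0..<k. real (N - i) / real (k - i) * real M)"
  proof (intro prod_mono conjI)
    fix i assume "i \<in> {0..<k}"
    with True assms have "real (M - i) * real N \<le> real (N - i) * real M"
      by (simp add: of_nat_diff algebra_simps mult_right_mono)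
    then show "real (M - i) / real (k - i) * real N \<le> real (N - i) / real (k - i) * real M"
      unfolding times_divide_eq_left by (rule divide_right_mono) simp_all
  qed simp
  also have "\<dots> = (\<Prod>i = 0..<k. real (N - i) / real (k - i)) * (\<Prod>i = 0..<k. real M)"
    by (rule prod.distrib)
  also have "\<dots> = real (N choose k) * real M ^ k"
    using True assms by (simp only: binomial_altdef_of_nat[OF order_trans] prod_constant card_atLeastLessThan diff_zero)
  finally show ?thesis .
qed (simp add: binomial_eq_0)

lemma card_supersets_with_card:
  assumes "finite W" "T \<subseteq> W" "card T \<le> M"
  shows "card {C. C \<subseteq> W \<and> card C = M \<and> T \<subseteq> C} = (card W - card T) choose (M - card T)"
proof -
  have fin: "finite T" using assms finite_subset by blast
  have "card (B \<union> T) = M" if "B \<subseteq> W - T" "card B = M - card T" for B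
    using that assms fin by (subst card_Un_disjoint) (auto intro: finite_subset)
  moreover have "card (C - T) = M - card T" if "card C = M" "T \<subseteq> C" for C
    using that fin by (simp add: card_Diff_subset)
  ultimately have "bij_betw (\<lambda>B. B \<union> T) {B. B \<subseteq> W - T \<and> card B = M - card T}
      {C. C \<subseteq> W \<and> card C = M \<and> T \<subseteq> C}"
    using assms(2) by (intro bij_betw_byWitness[where f' = "\<lambda>C. C - T"]) auto
  then have "card {C. C \<subseteq> W \<and> card C = M \<and> T \<subseteq> C} = card {B. B \<subseteq> W - T \<and> card B = M - card T}"
    by (simp add: bij_betw_same_card)
  also have "\<dots> = card (W - T) choose (M - card T)"
    using assms by (simp add: n_subsets)
  finally show ?thesis
    using assms fin by (simp add: card_Diff_subset)
qed

lemma card_subsets_containing_le: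
  assumes "finite W" "T \<subseteq> W" "M \<le> card W"
  shows "real (card {C. C \<subseteq> W \<and> card C = M \<and> T \<subseteq> C})
    \<le> real (card W choose M) * (real M / real (card W)) ^ card T"
proof (cases "card T \<le> M")
  case True
  define N k where "N = card W" and "k = card T"
  have kN: "k \<le> N" and MN: "M \<le> N"
    using True assms unfolding N_def k_def by linarith+
  have "real ((N - k) choose (M - k)) \<le> real (N choose M) * (real M / real N) ^ k"
  proof (cases "N = 0")
    case False
    have "real (N choose k) * real ((N - k) choose (M - k))
        = real (N choose M) * real (M choose k)"
      by (simp only: of_nat_mult[symmetric] choose_mult[OF True[folded k_def] MN])
    also have "\<dots> \<le> real (N choose M) * (real (N choose k) * (real M / real N) ^ k)"
      using binomial_mult_power_le[OF MN, of k] False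
      by (intro mult_left_mono) (simp_all add: power_divide pos_le_divide_eq)
    also have "\<dots> = real (N choose k) * (real (N choose M) * (real M / real N) ^ k)"
      by (simp only: mult.left_commute)
    finally show ?thesis
      using kN by (simp only: mult_le_cancel_left_pos of_nat_0_less_iff zero_less_binomial)
  qed (use kN MN in simp)
  then show ?thesis
    using card_supersets_with_card[OF assms(1,2) True] unfolding N_def k_def by simp
next
  case False
  have "card T \<le> card C" if "C \<subseteq> W" "T \<subseteq> C" for C
    using that assms(1) by (meson card_mono finite_subset)
  with False have empty: "{C. C \<subseteq> W \<and> card C = M \<and> T \<subseteq> C} = {}"
    by auto
  show ?thesis
    unfolding empty by simp
qed

lemma card_subsets_containing_some_le:
  assumes "finite W" "\<forall>T\<in>\<T>. T \<subseteq> W \<and> card T = k" "M \<le> card W"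
  shows "real (card {C. C \<subseteq> W \<and> card C = M \<and> (\<exists>T\<in>\<T>. T \<subseteq> C)})
    \<le> real (card \<T>) * real (card W choose M) * (real M / real (card W)) ^ k"
proof -
  have "\<T> \<subseteq> Pow W"
    using assms(2) by blast
  then have fin: "finite \<T>"
    using assms(1) by (simp add: finite_subset)
  have "{C. C \<subseteq> W \<and> card C = M \<and> (\<exists>T\<in>\<T>. T \<subseteq> C)}
      = (\<Union>T\<in>\<T>. {C. C \<subseteq> W \<and> card C = M \<and> T \<subseteq> C})"
    by auto
  then have "real (card {C. C \<subseteq> W \<and> card C = M \<and> (\<exists>T\<in>\<T>. T \<subseteq> C)})
      \<le> (\<Sum>T\<in>\<T>. real (card {C. C \<subseteq> W \<and> card C = M \<and> T \<subseteq> C}))"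
    using card_UN_le[OF fin] by (simp only: of_nat_le_iff flip: of_nat_sum)
  also have "\<dots> \<le> (\<Sum>T\<in>\<T>. real (card W choose M) * (real M / real (card W)) ^ k)"
  proof (rule sum_mono)
    fix T assume "T \<in> \<T>"
    with assms(2) have "T \<subseteq> W" "card T = k" by auto
    then show "real (card {C. C \<subseteq> W \<and> card C = M \<and> T \<subseteq> C})
        \<le> real (card W choose M) * (real M / real (card W)) ^ k"
      using card_subsets_containing_le[OF assms(1) \<open>T \<subseteq> W\<close> assms(3)] by simp
  qed
  also have "\<dots> = real (card \<T>) * (real (card W choose M) * (real M / real (card W)) ^ k)"
    by (rule sum_constant)
  finally show ?thesis
    by (simp only: mult.assoc)
qed

lemma random_code_prob_ge:
  assumes "M \<le> q ^ n"
    and "real (card {C. C \<subseteq> words q n \<and> card C = M \<and> \<not> P C}) \<le> \<delta> * real (q ^ n choose M)"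
  shows "1 - \<delta> \<le> random_code_prob q n M P"
proof -
  let ?codes = "\<lambda>P. {C. C \<subseteq> words q n \<and> card C = M \<and> P C}"
  have fin: "finite (?codes P)" for P
    by (rule finite_subset[of _ "Pow (words q n)"]) (auto simp: finite_words)
  have union: "?codes P \<union> ?codes (\<lambda>C. \<not> P C) = {C. C \<subseteq> words q n \<and> card C = M}"
    and disjoint: "?codes P \<inter> ?codes (\<lambda>C. \<not> P C) = {}"
    by auto
  have "card (?codes P) + card (?codes (\<lambda>C. \<not> P C)) = card {C. C \<subseteq> words q n \<and> card C = M}"
    unfolding union[symmetric] by (rule card_Un_disjoint[OF fin fin disjoint, symmetric])
  also have "\<dots> = q ^ n choose M"
    by (simp add: n_subsets finite_words card_words)
  finally have "card (?codes P) + card (?codes (\<lambda>C. \<not> P C)) = q ^ n choose M" .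
  then have "real (card (?codes P)) = real (q ^ n choose M) - real (card (?codes (\<lambda>C. \<not> P C)))"
    by (simp flip: of_nat_add)
  moreover have "0 < real (q ^ n choose M)"
    using assms(1) by simp
  ultimately show ?thesis
    using assms(2) by (simp add: random_code_prob_def card_words le_divide_eq algebra_simps)
qed

definition confusable_sets :: "nat \<Rightarrow> nat \<Rightarrow> real \<Rightarrow> nat \<Rightarrow> nat list set set" where
  "confusable_sets q n d k = {T. T \<subseteq> words q n \<and> card T = k \<and> (\<exists>r. \<forall>c\<in>T. del_from d c r)}"

lemma not_list_decodable_del_imp_confusable:
  assumes "C \<subseteq> words q n" "\<not> list_decodable_del C d L"
  obtains T where "T \<in> confusable_sets q n d (Suc L)" "T \<subseteq> C"
proof -
  obtain r where "Suc L \<le> card {c \<in> C. del_from d c r}"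
    using assms(2) by (auto simp: list_decodable_del_def not_le Suc_le_eq)
  then obtain T where T: "T \<subseteq> {c \<in> C. del_from d c r}" "card T = Suc L"
    by (rule obtain_subset_with_card_n)
  with assms(1) have "T \<in> confusable_sets q n d (Suc L)"
    by (auto simp: confusable_sets_def)
  with T show ?thesis
    using that by blast
qed

lemma confusable_sets_subset:
  assumes "0 < k"
  shows "confusable_sets q n d k
    \<subseteq> (\<Union>r\<in>{r. set r \<subseteq> {0..<q} \<and> length r \<le> n \<and> real (n - length r) \<le> d}.
          {T. T \<subseteq> supersequences q n r \<and> card T = k})"
proof
  fix T assume "T \<in> confusable_sets q n d k"
  then obtain r where T: "T \<subseteq> words q n" "card T = k" "\<forall>c\<in>T. del_from d c r"
    by (auto simp: confusable_sets_def)
  with assms obtain c where "c \<in> T"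
    by fastforce
  with T have c: "subseq r c" "c \<in> words q n" "real (length c - length r) \<le> d"
    by (auto simp: del_from_def)
  then have "set r \<subseteq> {0..<q}" "length r \<le> n" "real (n - length r) \<le> d"
    using set_mono_subseq[OF c(1)] list_emb_length[OF c(1)] by (auto simp: words_def)
  moreover have "T \<subseteq> supersequences q n r"
    using T by (auto simp: supersequences_def del_from_def)
  ultimately show "T \<in> (\<Union>r\<in>{r. set r \<subseteq> {0..<q} \<and> length r \<le> n \<and> real (n - length r) \<le> d}.
          {T. T \<subseteq> supersequences q n r \<and> card T = k})"
    using T(2) by blast
qed

lemma card_confusable_sets_le:
  assumes q: "2 \<le> q" and \<kappa>: "0 \<le> \<kappa>" "\<kappa> < (real q - 1) / real q" and "0 < k"
  shows "real (card (confusable_sets q n (\<kappa> * real n) k))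
    \<le> real q ^ (2 * n) * (real q powr (Hq q \<kappa> * real n)) ^ k"
proof -
  define R where "R = {r. set r \<subseteq> {0..<q} \<and> length r \<le> n \<and> real (n - length r) \<le> \<kappa> * real n}"
  have fin_R: "finite R"
    by (rule finite_subset[OF _ finite_lists_length_le[of "{0..<q}" n]]) (auto simp: R_def)
  have card_R: "card R \<le> q ^ (2 * n)"
    by (rule order_trans[OF card_mono card_short_words_le[OF q]])
       (auto simp: R_def intro: finite_lists_length_le)
  have choose_le: "a choose k \<le> a ^ k" for a
    by (cases "k \<le> a") (auto simp: binomial_le_pow binomial_eq_0)
  have "card (confusable_sets q n (\<kappa> * real n) k)
      \<le> card (\<Union>r\<in>R. {T. T \<subseteq> supersequences q n r \<and> card T = k})"
    using confusable_sets_subset[OF \<open>0 < k\<close>] fin_R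
    by (intro card_mono) (auto simp: R_def finite_supersequences)
  also have "\<dots> \<le> (\<Sum>r\<in>R. card {T. T \<subseteq> supersequences q n r \<and> card T = k})"
    by (rule card_UN_le[OF fin_R])
  also have "\<dots> \<le> (\<Sum>r\<in>R. card (supersequences q n r) ^ k)"
    by (intro sum_mono) (simp add: n_subsets finite_supersequences choose_le)
  finally have "real (card (confusable_sets q n (\<kappa> * real n) k))
      \<le> (\<Sum>r\<in>R. real (card (supersequences q n r)) ^ k)"
    by (simp flip: of_nat_sum of_nat_power)
  also have "\<dots> \<le> (\<Sum>r\<in>R. (real q powr (Hq q \<kappa> * real n)) ^ k)"
    using q \<kappa> by (intro sum_mono power_mono card_supersequences_le_entropy) (auto simp: R_def)
  also have "\<dots> \<le> real q ^ (2 * n) * (real q powr (Hq q \<kappa> * real n)) ^ k"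
    using card_R by (simp add: mult_right_mono flip: of_nat_power)
  finally show ?thesis .
qed

lemma card_not_list_decodable_del_le:
  assumes q: "2 \<le> q" and \<kappa>: "0 \<le> \<kappa>" "\<kappa> < (real q - 1) / real q" and M: "M \<le> q ^ n"
  shows "real (card {C. C \<subseteq> words q n \<and> card C = M \<and> \<not> list_decodable_del C (\<kappa> * real n) L})
    \<le> real q ^ (2 * n) * (real q powr (Hq q \<kappa> * real n)) ^ Suc L * real (q ^ n choose M)
      * (real M / real q ^ n) ^ Suc L"
proof -
  define W where "W = words q n"
  define \<T> where "\<T> = confusable_sets q n (\<kappa> * real n) (Suc L)"
  have bad_subset: "{C. C \<subseteq> W \<and> card C = M \<and> \<not> list_decodable_del C (\<kappa> * real n) L}
      \<subseteq> {C. C \<subseteq> W \<and> card C = M \<and> (\<exists>T\<in>\<T>. T \<subseteq> C)}"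
  proof
    fix C assume "C \<in> {C. C \<subseteq> W \<and> card C = M \<and> \<not> list_decodable_del C (\<kappa> * real n) L}"
    then have C: "C \<subseteq> words q n" "card C = M" "\<not> list_decodable_del C (\<kappa> * real n) L"
      by (simp_all add: W_def)
    obtain T where "T \<in> \<T>" "T \<subseteq> C"
      unfolding \<T>_def using C(1,3) by (rule not_list_decodable_del_imp_confusable)
    with C show "C \<in> {C. C \<subseteq> W \<and> card C = M \<and> (\<exists>T\<in>\<T>. T \<subseteq> C)}"
      by (auto simp: W_def)
  qed
  have "finite {C. C \<subseteq> W \<and> card C = M \<and> (\<exists>T\<in>\<T>. T \<subseteq> C)}"
    by (rule finite_subset[of _ "Pow W"]) (auto simp: W_def finite_words)
  then have "real (card {C. C \<subseteq> W \<and> card C = M \<and> \<not> list_decodable_del C (\<kappa> * real n) L})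
      \<le> real (card {C. C \<subseteq> W \<and> card C = M \<and> (\<exists>T\<in>\<T>. T \<subseteq> C)})"
    using bad_subset by (simp add: card_mono)
  also have "\<dots> \<le> real (card \<T>) * real (card W choose M) * (real M / real (card W)) ^ Suc L"
    using M by (intro card_subsets_containing_some_le)
      (auto simp: W_def \<T>_def finite_words card_words confusable_sets_def)
  also have "\<dots> \<le> real q ^ (2 * n) * (real q powr (Hq q \<kappa> * real n)) ^ Suc L * real (q ^ n choose M)
      * (real M / real q ^ n) ^ Suc L"
    using card_confusable_sets_le[OF q \<kappa> zero_less_Suc, of n L]
    unfolding \<T>_def W_def card_words of_nat_power by (intro mult_right_mono) simp_all
  finally show ?thesis
    unfolding W_def .
qed

lemma union_bound_exponent_le:
  fixes x H \<epsilon> :: real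
  assumes x: "1 \<le> x" and \<epsilon>: "3 \<le> \<epsilon> * real k"
  shows "x ^ (2 * n) * (x powr (H * real n)) ^ k * (x powr (- (H + \<epsilon>) * real n)) ^ k \<le> x powr (- real n)"
proof -
  have "x ^ (2 * n) * (x powr (H * real n)) ^ k * (x powr (- (H + \<epsilon>) * real n)) ^ k
      = x powr (2 * real n) * (x powr (H * real n) * x powr (- (H + \<epsilon>) * real n)) ^ k"
    using x by (simp add: power_mult_distrib powr_realpow[symmetric])
  also have "\<dots> = x powr (2 * real n) * x powr (real k * - (\<epsilon> * real n))"
  proof -
    have "x powr (H * real n) * x powr (- (H + \<epsilon>) * real n) = x powr (- (\<epsilon> * real n))"
      by (simp add: powr_add[symmetric] algebra_simps)
    then show ?thesis
      using x by (simp add: powr_power)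
  qed
  also have "\<dots> = x powr (2 * real n - real k * (\<epsilon> * real n))"
    by (simp add: powr_add[symmetric])
  also have "\<dots> \<le> x powr (- real n)"
    using mult_right_mono[OF \<epsilon>, of "real n"] x by (intro powr_mono) (simp_all add: algebra_simps)
  finally show ?thesis .
qed

lemma random_code_size_ratio_le:
  fixes H \<epsilon> :: real
  assumes "2 \<le> q"
  shows "real (nat \<lfloor>real q powr ((1 - H - \<epsilon>) * real n)\<rfloor>) / real q ^ n
    \<le> real q powr (- (H + \<epsilon>) * real n)"
proof -
  have q_pow: "real q ^ n = real q powr real n"
    using assms by (simp add: powr_realpow)
  have "real (nat \<lfloor>real q powr ((1 - H - \<epsilon>) * real n)\<rfloor>) / real q ^ n
      \<le> real q powr ((1 - H - \<epsilon>) * real n) / real q powr real n"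
    unfolding q_pow by (rule divide_right_mono) simp_all
  also have "\<dots> = real q powr ((1 - H - \<epsilon>) * real n - real n)"
    by (rule powr_diff[symmetric])
  also have "(1 - H - \<epsilon>) * real n - real n = - (H + \<epsilon>) * real n"
    by (simp add: algebra_simps)
  finally show ?thesis .
qed

lemma random_code_list_decodable_del_prob_ge:
  fixes \<epsilon> \<kappa> :: real
  assumes q: "2 \<le> q" and \<epsilon>: "0 < \<epsilon>" "3 \<le> \<epsilon> * real (Suc L)"
    and \<kappa>: "0 \<le> \<kappa>" "\<kappa> < (real q - 1) / real q"
  shows "1 - real q powr (- real n)
    \<le> random_code_prob q n (nat \<lfloor>real q powr ((1 - Hq q \<kappa> - \<epsilon>) * real n)\<rfloor>)
         (\<lambda>C. list_decodable_del C (\<kappa> * real n) L)"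
proof -
  define H where "H = Hq q \<kappa>"
  define M where "M = nat \<lfloor>real q powr ((1 - H - \<epsilon>) * real n)\<rfloor>"
  have q1: "1 \<le> real q"
    using q by simp
  have "(real q - 1) / real q < 1"
    using q by simp
  then have "\<kappa> < 1"
    using \<kappa>(2) by linarith
  then have "0 \<le> H"
    unfolding H_def by (rule Hq_nonneg[OF q \<kappa>(1)])
  have ratio: "real M / real q ^ n \<le> real q powr (- (H + \<epsilon>) * real n)"
    unfolding M_def using q by (rule random_code_size_ratio_le)
  also have "\<dots> \<le> real q powr 0"
    using \<open>0 \<le> H\<close> \<epsilon>(1) q1 by (intro powr_mono mult_nonpos_nonneg) simp_all
  finally have M_le_pow: "M \<le> q ^ n"
    using q by (simp add: divide_le_eq_1 flip: of_nat_power)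
  have "real (card {C. C \<subseteq> words q n \<and> card C = M \<and> \<not> list_decodable_del C (\<kappa> * real n) L})
      \<le> real q ^ (2 * n) * (real q powr (H * real n)) ^ Suc L * real (q ^ n choose M)
        * (real M / real q ^ n) ^ Suc L"
    unfolding H_def by (rule card_not_list_decodable_del_le[OF q \<kappa> M_le_pow])
  also have "\<dots> \<le> real q ^ (2 * n) * (real q powr (H * real n)) ^ Suc L * real (q ^ n choose M)
        * (real q powr (- (H + \<epsilon>) * real n)) ^ Suc L"
    using ratio by (intro mult_left_mono power_mono) simp_all
  also have "\<dots> = (real q ^ (2 * n) * (real q powr (H * real n)) ^ Suc L
        * (real q powr (- (H + \<epsilon>) * real n)) ^ Suc L) * real (q ^ n choose M)"
    by (simp only: mult_ac)
  also have "\<dots> \<le> real q powr (- real n) * real (q ^ n choose M)"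
    using union_bound_exponent_le[OF q1 \<epsilon>(2)] by (rule mult_right_mono) simp
  finally show ?thesis
    using M_le_pow unfolding M_def H_def by (intro random_code_prob_ge)
qed

theorem mainTheorem7:
  fixes q :: nat
  assumes "q \<ge> 2"
  shows "\<exists>c > 0. \<forall>\<epsilon> \<kappa>. 0 < \<epsilon> \<and> \<epsilon> < 1 \<and> 0 \<le> \<kappa> \<and> \<kappa> < (real q - 1) / real q \<longrightarrow>
     (\<exists>N. \<forall>n \<ge> N.
        random_code_prob q n (nat \<lfloor>real q powr ((1 - Hq q \<kappa> - \<epsilon>) * real n)\<rfloor>)
          (\<lambda>C. list_decodable_del C (\<kappa> * real n) (nat \<lfloor>c / \<epsilon>\<rfloor>))
        \<ge> 1 - real q powr (- real n))"
proof (rule exI[of _ 3], intro conjI allI impI)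
  fix \<epsilon> \<kappa> :: real
  assume h: "0 < \<epsilon> \<and> \<epsilon> < 1 \<and> 0 \<le> \<kappa> \<and> \<kappa> < (real q - 1) / real q"
  then have "3 / \<epsilon> \<le> real (Suc (nat \<lfloor>3 / \<epsilon>\<rfloor>))"
    by linarith
  then have "3 \<le> \<epsilon> * real (Suc (nat \<lfloor>3 / \<epsilon>\<rfloor>))"
    using h by (simp add: divide_le_eq mult.commute)
  then show "\<exists>N. \<forall>n \<ge> N.
      random_code_prob q n (nat \<lfloor>real q powr ((1 - Hq q \<kappa> - \<epsilon>) * real n)\<rfloor>)
        (\<lambda>C. list_decodable_del C (\<kappa> * real n) (nat \<lfloor>3 / \<epsilon>\<rfloor>))
      \<ge> 1 - real q powr (- real n)"
    using random_code_list_decodable_del_prob_ge[OF assms] h by blast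
qed simp

end
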